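(* Let $A\in\{0,1\}^{n\times n}$ be a decomposable maximal matrix and let $n=\prod_{j=1}^m p_j^{k_j}$ be the prime factorization of $n$ (distinct primes $p_j$, exponents $k_j\ge1$). Let $\mathcal{L}=\{n_1:(n_1,n_2)\text{ is a compatible pair and } A \text{ admits an } (n_1,n_2)\text{ factorization}\}$. For any branch $\mathfrak{l}_0<\dots<\mathfrak{l}_q$ of $\mathcal{L}$, let $(n_1,\dots,n_\ell)=(\mathfrak{l}_0,\mathfrak{l}_1/\mathfrak{l}_0,\dots,\mathfrak{l}_q/\mathfrak{l}_{q-1},n/\mathfrak{l}_q)$ be the sizes of the factorization resulting from the branch. Then: (1) $n_i\in\{p_1,\dots,p_m\}$ for all $i=1,\dots,\ell$; (2) $\ell=\sum_{j=1}^m k_j$; (3) the number of branches of $\mathcal{L}$ is $\dfrac{\ell!}{\prod_{j=1}^m k_j!}$.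
   Context: Kronecker products of binary matrices use Boolean arithmetic ($1+1=1$). An $(n_1,\dots,n_m)$ factorization of $A$ is $A=A_1\otimes\cdots\otimes A_m$ with $A_i\in\{0,1\}^{n_i\times n_i}$, $\prod n_i=n$. A compatible pair for $n$ is $(n_1,n_2)$ with $n_1,n_2$ positive divisors of $n$ different from $1$ and $n$ and $n_1n_2=n$. $A$ is decomposable if it admits an $(n_1,\dots,n_\ell)$ factorization with $\ell>1$ and all $n_i>1$; a decomposable $A$ is maximal if it admits an $(n_1,n_2)$ factorization for every compatible pair $(n_1,n_2)$. For a finite set $\mathcal{X}\subset\mathbb{N}$, $\overline{\mathcal{X}}$ denotes the set of elements of $\mathcal{X}$ that are not multiples of another element of $\mathcal{X}$. A branch of $\mathcal{L}$ is a sequence $\mathfrak{l}_0,\dots,\mathfrak{l}_q$ ($q\ge0$) with $\mathfrak{l}_0\in\overline{\mathcal{L}}$; for $k\ge1$, $\mathfrak{l}_k\in\overline{\mathcal{M}_k}$ where $\mathcal{M}_k$ is the set of elements of $\mathcal{L}$ that are multiples of $\mathfrak{l}_{k-1}$ other than $\mathfrak{l}_{k-1}$; the sequence stops at $\mathfrak{l}_q$ when $\mathcal{L}$ contains no multiple of $\mathfrak{l}_q$ other than itself. *)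

theory Defs
  imports "HOL-Computational_Algebra.Primes"
begin

text \<open>Binary matrices of size k x k are represented as functions nat => nat => bool;
  only entries with both indices < k are meaningful. Entry True means 1.\<close>

type_synonym bmat = "nat \<Rightarrow> nat \<Rightarrow> bool"

definition mat_eq :: "nat \<Rightarrow> bmat \<Rightarrow> bmat \<Rightarrow> bool" where
  "mat_eq n A B \<longleftrightarrow> (\<forall>i<n. \<forall>j<n. A i j = B i j)"

definition bkron :: "nat \<Rightarrow> bmat \<Rightarrow> bmat \<Rightarrow> bmat" where
  "bkron m B C = (\<lambda>i j. B (i div m) (j div m) \<and> C (i mod m) (j mod m))"

text \<open>Kronecker product of a list of (size, matrix) pairs; the empty product is the 1x1 matrix [1].\<close>
fun bkron_list :: "(nat \<times> bmat) list \<Rightarrow> bmat" where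
  "bkron_list [] = (\<lambda>i j. True)"
| "bkron_list ((k, B) # rest) = bkron (prod_list (map fst rest)) B (bkron_list rest)"

definition has_factorization :: "nat \<Rightarrow> bmat \<Rightarrow> nat list \<Rightarrow> bool" where
  "has_factorization n A ns \<longleftrightarrow> prod_list ns = n \<and>
     (\<exists>Ms :: bmat list. length Ms = length ns \<and> mat_eq n A (bkron_list (zip ns Ms)))"

definition compatible_pair :: "nat \<Rightarrow> nat \<Rightarrow> nat \<Rightarrow> bool" where
  "compatible_pair n n1 n2 \<longleftrightarrow> n1 dvd n \<and> n2 dvd n \<and> n1 > 0 \<and> n2 > 0 \<and>
     n1 \<noteq> 1 \<and> n1 \<noteq> n \<and> n2 \<noteq> 1 \<and> n2 \<noteq> n \<and> n1 * n2 = n"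

definition decomposable :: "nat \<Rightarrow> bmat \<Rightarrow> bool" where
  "decomposable n A \<longleftrightarrow> (\<exists>ns. length ns > 1 \<and> (\<forall>k\<in>set ns. k > 1) \<and> has_factorization n A ns)"

definition maximal :: "nat \<Rightarrow> bmat \<Rightarrow> bool" where
  "maximal n A \<longleftrightarrow> decomposable n A \<and>
     (\<forall>n1 n2. compatible_pair n n1 n2 \<longrightarrow> has_factorization n A [n1, n2])"

definition factor_set :: "nat \<Rightarrow> bmat \<Rightarrow> nat set" where
  "factor_set n A = {n1. \<exists>n2. compatible_pair n n1 n2 \<and> has_factorization n A [n1, n2]}"

definition minimal_elems :: "nat set \<Rightarrow> nat set" where
  "minimal_elems X = {x\<in>X. \<not> (\<exists>y\<in>X. y \<noteq> x \<and> y dvd x)}"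

definition proper_multiples :: "nat set \<Rightarrow> nat \<Rightarrow> nat set" where
  "proper_multiples L l = {x\<in>L. l dvd x \<and> x \<noteq> l}"

definition is_branch :: "nat set \<Rightarrow> nat list \<Rightarrow> bool" where
  "is_branch L ls \<longleftrightarrow> ls \<noteq> [] \<and> hd ls \<in> minimal_elems L \<and>
     (\<forall>k. 0 < k \<and> k < length ls \<longrightarrow> ls ! k \<in> minimal_elems (proper_multiples L (ls ! (k - 1)))) \<and>
     proper_multiples L (last ls) = {}"

definition branch_sizes :: "nat \<Rightarrow> nat list \<Rightarrow> nat list" where
  "branch_sizes n ls = hd ls # map (\<lambda>k. ls ! (k + 1) div ls ! k) [0..<length ls - 1] @ [n div last ls]"

end

(* For a maximal A every divisor d of n with 1 < d < n is the first size of a two-factor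
   factorization, so L is the set of nontrivial divisors of n. Inside it the minimal proper
   multiples of l are the products l * p with p a prime for which l * p is still a nontrivial
   divisor, and l has no proper multiple exactly when n div l is prime. So a branch is a chain
   l_0 | l_1 | ... | l_q with prime l_0, prime successive quotients and prime n div l_q, i.e. its
   sizes are an ordering of the prime factorization of n; conversely the inner prefix products of
   every such ordering form a branch. Branches are thus in bijection with the permutations of the
   multiset of prime factors of n, which are counted by the multinomial coefficient. *)

theory Submission
  imports Defs "HOL-Combinatorics.Multiset_Permutations"
begin

definition nontrivial_divisors :: "nat \<Rightarrow> nat set" where
  "nontrivial_divisors n = {d. d dvd n \<and> 1 < d \<and> d < n}"

lemma nontrivial_divisors_empty_iff:
  assumes "1 < n"
  shows "nontrivial_divisors n = {} \<longleftrightarrow> prime n"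
proof
  assume "nontrivial_divisors n = {}"
  have "m = 1 \<or> m = n" if "m dvd n" for m
  proof -
    have "\<not> (1 < m \<and> m < n)" using \<open>nontrivial_divisors n = {}\<close> that
      by (auto simp: nontrivial_divisors_def)
    then show ?thesis using that assms dvd_imp_le[of m n] dvd_pos_nat[of n m] by linarith
  qed
  then show "prime n" using assms by (simp add: prime_nat_iff)
next
  assume "prime n"
  then show "nontrivial_divisors n = {}"
    by (auto simp: nontrivial_divisors_def prime_nat_iff)
qed

lemma minimal_elems_nontrivial_divisors:
  "minimal_elems (nontrivial_divisors n) = {p \<in> nontrivial_divisors n. prime p}"
proof (intro set_eqI iffI)
  fix x assume x: "x \<in> minimal_elems (nontrivial_divisors n)"
  then have "x \<in> nontrivial_divisors n" by (simp add: minimal_elems_def)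
  moreover have "prime x"
  proof (rule ccontr)
    assume "\<not> prime x"
    obtain p where p: "prime p" "p dvd x"
      using \<open>x \<in> nontrivial_divisors n\<close> prime_factor_nat[of x] by (auto simp: nontrivial_divisors_def)
    with \<open>\<not> prime x\<close> have "p \<noteq> x" by auto
    moreover have "p \<in> nontrivial_divisors n"
      using p \<open>x \<in> nontrivial_divisors n\<close> prime_gt_1_nat[of p] dvd_imp_le[of p x]
      by (auto simp: nontrivial_divisors_def intro: dvd_trans)
    ultimately show False using x p(2) by (auto simp: minimal_elems_def)
  qed
  ultimately show "x \<in> {p \<in> nontrivial_divisors n. prime p}" by simp
next
  fix x assume "x \<in> {p \<in> nontrivial_divisors n. prime p}"
  then show "x \<in> minimal_elems (nontrivial_divisors n)"
    by (auto simp: minimal_elems_def nontrivial_divisors_def prime_nat_iff)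
qed

lemma minimal_elems_image_mult:
  fixes l :: nat
  assumes "0 < l"
  shows "minimal_elems ((*) l ` X) = (*) l ` minimal_elems X"
  using assms by (auto simp: minimal_elems_def)

lemma proper_multiples_nontrivial_divisors:
  assumes "l \<in> nontrivial_divisors n"
  shows "proper_multiples (nontrivial_divisors n) l = (*) l ` nontrivial_divisors (n div l)"
proof -
  obtain q where n: "n = l * q" and l: "1 < l"
    using assms by (auto simp: nontrivial_divisors_def elim: dvdE)
  have key: "l * m \<in> nontrivial_divisors n \<and> l * m \<noteq> l \<longleftrightarrow> m \<in> nontrivial_divisors q" for m
  proof -
    have "1 < l * m \<and> l * m \<noteq> l \<longleftrightarrow> 1 < m"
      using l less_1_mult[of l m] by (cases m) auto
    moreover have "l * m dvd n \<longleftrightarrow> m dvd q" "l * m < n \<longleftrightarrow> m < q"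
      using l by (simp_all add: n)
    ultimately show ?thesis
      unfolding nontrivial_divisors_def by blast
  qed
  have "proper_multiples (nontrivial_divisors n) l =
          (*) l ` {m. l * m \<in> nontrivial_divisors n \<and> l * m \<noteq> l}"
    unfolding proper_multiples_def by (auto simp: dvd_def)
  moreover have "n div l = q" using l by (simp add: n)
  ultimately show ?thesis using key by simp
qed

lemma minimal_proper_multiples_nontrivial_divisors:
  assumes "l \<in> nontrivial_divisors n"
  shows "minimal_elems (proper_multiples (nontrivial_divisors n) l) =
           (*) l ` {p \<in> nontrivial_divisors (n div l). prime p}"
proof -
  have "0 < l" using assms by (simp add: nontrivial_divisors_def)
  then show ?thesis
    using assms by (simp add: proper_multiples_nontrivial_divisors minimal_elems_image_mult
        minimal_elems_nontrivial_divisors)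
qed

lemma proper_multiples_nontrivial_divisors_empty_iff:
  assumes "l \<in> nontrivial_divisors n"
  shows "proper_multiples (nontrivial_divisors n) l = {} \<longleftrightarrow> prime (n div l)"
proof -
  obtain q where n: "n = l * q" and "0 < l" "l < n"
    using assms by (auto simp: nontrivial_divisors_def elim: dvdE)
  then have "n div l = q" "1 < q" by (auto intro: ccontr)
  then show ?thesis
    using assms by (simp add: proper_multiples_nontrivial_divisors nontrivial_divisors_empty_iff)
qed

lemma branch_of_nontrivial_divisors:
  assumes "is_branch (nontrivial_divisors n) ls"
  shows "set ls \<subseteq> nontrivial_divisors n"
    and "prime (hd ls)"
    and "\<And>k. 0 < k \<Longrightarrow> k < length ls \<Longrightarrow> \<exists>p. prime p \<and> ls ! k = ls ! (k - 1) * p"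
    and "prime (n div last ls)"
proof -
  have ne: "ls \<noteq> []"
    and hd: "hd ls \<in> minimal_elems (nontrivial_divisors n)"
    and step: "\<And>k. 0 < k \<Longrightarrow> k < length ls \<Longrightarrow>
                 ls ! k \<in> minimal_elems (proper_multiples (nontrivial_divisors n) (ls ! (k - 1)))"
    and last: "proper_multiples (nontrivial_divisors n) (last ls) = {}"
    using assms by (auto simp: is_branch_def)
  have "ls ! k \<in> nontrivial_divisors n" if "k < length ls" for k
  proof (cases "k = 0")
    case True
    then show ?thesis using hd ne by (simp add: hd_conv_nth minimal_elems_def)
  next
    case False
    then show ?thesis
      using step[of k] that by (simp add: minimal_elems_def proper_multiples_def)
  qed
  then show set: "set ls \<subseteq> nontrivial_divisors n"
    by (auto simp: in_set_conv_nth)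
  show "prime (hd ls)"
    using hd by (simp add: minimal_elems_nontrivial_divisors)
  show "\<exists>p. prime p \<and> ls ! k = ls ! (k - 1) * p" if "0 < k" "k < length ls" for k
  proof -
    have "ls ! (k - 1) \<in> nontrivial_divisors n"
      using set that by (auto intro: nth_mem)
    then show ?thesis
      using step[OF that] by (auto simp: minimal_proper_multiples_nontrivial_divisors)
  qed
  have "last ls \<in> nontrivial_divisors n"
    using set ne by auto
  then show "prime (n div last ls)"
    using last by (simp add: proper_multiples_nontrivial_divisors_empty_iff)
qed

lemma length_branch_sizes:
  "ls \<noteq> [] \<Longrightarrow> length (branch_sizes n ls) = Suc (length ls)"
  by (simp add: branch_sizes_def)

lemma nth_branch_sizes:
  assumes "ls \<noteq> []" "i \<le> length ls"
  shows "branch_sizes n ls ! i =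
           (if i = 0 then hd ls else if i < length ls then ls ! i div ls ! (i - 1) else n div last ls)"
  using assms by (auto simp: branch_sizes_def nth_append nth_Cons split: nat.split)

lemma prime_branch_sizes:
  assumes "is_branch (nontrivial_divisors n) ls"
  shows "\<forall>x\<in>set (branch_sizes n ls). prime x"
proof -
  note branch = branch_of_nontrivial_divisors[OF assms]
  have "prime (ls ! (k + 1) div ls ! k)" if "k < length ls - 1" for k
  proof -
    have "\<exists>p. prime p \<and> ls ! (k + 1) = ls ! k * p"
      using branch(3)[of "k + 1"] that by simp
    then obtain p where "prime p" "ls ! (k + 1) = ls ! k * p" by blast
    moreover have "ls ! k \<in> nontrivial_divisors n"
      using branch(1) that by auto
    ultimately have "ls ! (k + 1) div ls ! k = p" by (simp add: nontrivial_divisors_def)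
    then show ?thesis using \<open>prime p\<close> by simp
  qed
  then show ?thesis
    using branch(2,4) by (auto simp: branch_sizes_def)
qed

definition inner_prefix_products :: "nat list \<Rightarrow> nat list" where
  "inner_prefix_products xs = map (\<lambda>k. prod_list (take k xs)) [1..<length xs]"

lemma length_inner_prefix_products: "length (inner_prefix_products xs) = length xs - 1"
  by (simp add: inner_prefix_products_def)

lemma nth_inner_prefix_products:
  "k < length xs - 1 \<Longrightarrow> inner_prefix_products xs ! k = prod_list (take (Suc k) xs)"
  by (simp add: inner_prefix_products_def del: upt_Suc)

lemma prod_list_take_branch_sizes:
  assumes "\<And>k. 0 < k \<Longrightarrow> k < length ls \<Longrightarrow> ls ! (k - 1) dvd ls ! k" and "k < length ls"
  shows "prod_list (take (Suc k) (branch_sizes n ls)) = ls ! k"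
  using assms(2)
proof (induction k)
  case 0
  then show ?case by (simp add: branch_sizes_def hd_conv_nth)
next
  case (Suc k)
  have ne: "ls \<noteq> []" using Suc.prems by auto
  have "take (Suc (Suc k)) (branch_sizes n ls) =
          take (Suc k) (branch_sizes n ls) @ [ls ! Suc k div ls ! k]"
    using Suc.prems ne by (simp add: take_Suc_conv_app_nth length_branch_sizes nth_branch_sizes)
  then have "prod_list (take (Suc (Suc k)) (branch_sizes n ls)) =
              ls ! k * (ls ! Suc k div ls ! k)"
    using Suc by simp
  also have "\<dots> = ls ! Suc k"
    using assms(1)[of "Suc k"] Suc.prems by simp
  finally show ?case .
qed

lemma inner_prefix_products_branch_sizes:
  assumes "ls \<noteq> []" and "\<And>k. 0 < k \<Longrightarrow> k < length ls \<Longrightarrow> ls ! (k - 1) dvd ls ! k"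
  shows "inner_prefix_products (branch_sizes n ls) = ls"
  using assms
  by (intro nth_equalityI)
     (simp_all add: length_inner_prefix_products length_branch_sizes nth_inner_prefix_products
        prod_list_take_branch_sizes)

lemma prod_list_branch_sizes:
  assumes "ls \<noteq> []" and "\<And>k. 0 < k \<Longrightarrow> k < length ls \<Longrightarrow> ls ! (k - 1) dvd ls ! k"
    and "last ls dvd n"
  shows "prod_list (branch_sizes n ls) = n"
proof -
  have "branch_sizes n ls = take (length ls) (branch_sizes n ls) @ [n div last ls]"
    using assms(1) by (auto simp: branch_sizes_def neq_Nil_conv)
  also have "prod_list \<dots> = last ls * (n div last ls)"
    using assms(1) prod_list_take_branch_sizes[OF assms(2), of "length ls - 1" n]
    by (simp add: last_conv_nth)
  also have "\<dots> = n"
    using assms(3) by simp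
  finally show ?thesis .
qed

lemma prod_list_gt_1:
  fixes xs :: "nat list"
  assumes "xs \<noteq> []" and "\<forall>x\<in>set xs. 1 < x"
  shows "1 < prod_list xs"
  using assms
proof (induction xs)
  case (Cons x xs)
  then show ?case by (cases "xs = []") (auto intro: one_less_mult)
qed simp

lemma prod_list_div_prod_list_take:
  fixes xs :: "nat list"
  assumes "0 \<notin> set xs"
  shows "prod_list xs div prod_list (take j xs) = prod_list (drop j xs)"
proof -
  have "prod_list (take j xs) \<noteq> 0"
    using assms by (simp add: prod_list_zero_iff) (meson in_set_takeD)
  then show ?thesis
    by (metis append_take_drop_id prod_list.append nonzero_mult_div_cancel_left)
qed

lemma prod_list_take_nontrivial_divisor:
  fixes xs :: "nat list"
  assumes "\<forall>x\<in>set xs. 1 < x" and "0 < j" "j < length xs"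
  shows "prod_list (take j xs) \<in> nontrivial_divisors (prod_list xs)"
proof -
  have split: "prod_list xs = prod_list (take j xs) * prod_list (drop j xs)"
    by (metis append_take_drop_id prod_list.append)
  have "1 < prod_list (take j xs)"
    by (rule prod_list_gt_1) (use assms in \<open>auto dest: in_set_takeD\<close>)
  moreover have "1 < prod_list (drop j xs)"
    by (rule prod_list_gt_1) (use assms in \<open>auto dest: in_set_dropD\<close>)
  ultimately show ?thesis
    unfolding nontrivial_divisors_def by (simp add: split)
qed

lemma branch_sizes_inner_prefix_products:
  fixes xs :: "nat list"
  assumes "2 \<le> length xs" and "0 \<notin> set xs"
  shows "branch_sizes (prod_list xs) (inner_prefix_products xs) = xs"
proof -
  define ls where "ls = inner_prefix_products xs"
  have len: "length ls = length xs - 1"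
    by (simp add: ls_def length_inner_prefix_products)
  with assms(1) have ne: "ls \<noteq> []" by auto
  have take_Suc: "prod_list (take (Suc i) xs) = prod_list (take i xs) * xs ! i"
    if "i < length xs" for i
    using that by (simp add: take_Suc_conv_app_nth)
  have take_pos: "0 < prod_list (take i xs)" for i
    using assms(2) by (metis in_set_takeD neq0_conv prod_list_zero_iff)
  have "branch_sizes (prod_list xs) ls ! i = xs ! i" if i: "i < length xs" for i
  proof -
    consider "i = 0" | "0 < i" "i < length xs - 1" | "i = length xs - 1"
      using i by linarith
    then show ?thesis
    proof cases
      case 1
      have "ls ! 0 = prod_list (take 1 xs)"
        using assms(1) by (simp add: ls_def nth_inner_prefix_products)
      then show ?thesis
        using 1 ne assms(1) by (cases xs) (simp_all add: nth_branch_sizes hd_conv_nth)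
    next
      case 2
      then show ?thesis
        using ne len take_Suc[of i] take_pos[of i]
        by (simp add: nth_branch_sizes ls_def nth_inner_prefix_products)
    next
      case 3
      have "last ls = prod_list (take (length xs - 1) xs)"
        using ne len assms(1)
        by (simp add: last_conv_nth ls_def nth_inner_prefix_products Suc_diff_Suc)
      then show ?thesis
        using 3 ne len assms take_Suc[of "length xs - 1"] take_pos[of "length xs - 1"]
        by (simp add: nth_branch_sizes)
    qed
  qed
  then show ?thesis
    using ne len assms(1) by (intro nth_equalityI) (simp_all add: length_branch_sizes ls_def)
qed

lemma is_branch_inner_prefix_products:
  assumes "\<forall>p\<in>set ps. prime p" and "2 \<le> length ps"
  shows "is_branch (nontrivial_divisors (prod_list ps)) (inner_prefix_products ps)"
proof -
  define n where "n = prod_list ps"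
  define P where "P j = prod_list (take j ps)" for j
  define ls where "ls = inner_prefix_products ps"
  have gt1: "\<forall>x\<in>set ps. 1 < x"
    using assms(1) prime_gt_1_nat by blast
  then have no0: "0 \<notin> set ps" by auto
  have len: "length ls = length ps - 1"
    by (simp add: ls_def length_inner_prefix_products)
  have nth: "ls ! k = P (Suc k)" if "k < length ls" for k
    using that len by (simp add: ls_def P_def nth_inner_prefix_products)
  have in_D: "P j \<in> nontrivial_divisors n" if "0 < j" "j < length ps" for j
    using prod_list_take_nontrivial_divisor[OF gt1 that] by (simp add: P_def n_def)
  have drop: "prod_list (drop j ps) = ps ! j * prod_list (drop (Suc j) ps)" if "j < length ps" for j
    using that by (simp add: Cons_nth_drop_Suc[symmetric])
  have quotient: "n div P j = prod_list (drop j ps)" for j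
    using prod_list_div_prod_list_take[OF no0] by (simp add: n_def P_def)
  have ne: "ls \<noteq> []"
    using len assms(2) by auto
  have hd: "hd ls \<in> minimal_elems (nontrivial_divisors n)"
  proof -
    have "hd ls = P 1"
      using ne nth[of 0] by (simp add: hd_conv_nth)
    moreover have "P 1 = ps ! 0" "prime (ps ! 0)"
      using assms by (cases ps; simp add: P_def)+
    ultimately show ?thesis
      using in_D[of 1] assms by (simp add: minimal_elems_nontrivial_divisors)
  qed
  have step: "P (Suc j) \<in> minimal_elems (proper_multiples (nontrivial_divisors n) (P j))"
    if j: "0 < j" "Suc j < length ps" for j
  proof -
    have "ps ! j \<in> nontrivial_divisors (prod_list (drop j ps))"
      using prod_list_take_nontrivial_divisor[of "drop j ps" 1] gt1 j
      by (auto simp: Cons_nth_drop_Suc[symmetric] dest: in_set_dropD)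
    moreover have "prime (ps ! j)"
      using assms(1) j by auto
    moreover have "P (Suc j) = P j * ps ! j"
      using j by (simp add: P_def take_Suc_conv_app_nth)
    ultimately show ?thesis
      using j in_D[of j] by (auto simp: minimal_proper_multiples_nontrivial_divisors quotient)
  qed
  have last: "proper_multiples (nontrivial_divisors n) (last ls) = {}"
  proof -
    have "last ls = P (length ps - 1)"
      using ne len assms(2) nth[of "length ls - 1"] by (simp add: last_conv_nth Suc_diff_Suc)
    moreover have "n div P (length ps - 1) = ps ! (length ps - 1)"
      using assms(2) drop[of "length ps - 1"] by (simp add: quotient)
    ultimately show ?thesis
      using assms in_D[of "length ps - 1"]
      by (simp add: proper_multiples_nontrivial_divisors_empty_iff)
  qed
  moreover have "ls ! k \<in> minimal_elems (proper_multiples (nontrivial_divisors n) (ls ! (k - 1)))"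
    if "0 < k" "k < length ls" for k
    using that step[of k] len by (simp add: nth)
  ultimately show ?thesis
    using ne hd by (simp add: is_branch_def ls_def n_def)
qed

lemma branch_sizes_of_branch:
  assumes "is_branch (nontrivial_divisors n) ls"
  shows "mset (branch_sizes n ls) = prime_factorization n"
    and "inner_prefix_products (branch_sizes n ls) = ls"
proof -
  note branch = branch_of_nontrivial_divisors[OF assms]
  have ne: "ls \<noteq> []"
    using assms by (simp add: is_branch_def)
  have chain: "ls ! (k - 1) dvd ls ! k" if "0 < k" "k < length ls" for k
    using branch(3)[OF that] by auto
  have "last ls \<in> nontrivial_divisors n"
    using branch(1) ne by auto
  then have "last ls dvd n"
    by (simp add: nontrivial_divisors_def)
  then have "prod_mset (mset (branch_sizes n ls)) = n"
    by (simp add: prod_mset_prod_list prod_list_branch_sizes[OF ne chain])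
  then show "mset (branch_sizes n ls) = prime_factorization n"
    using prime_factorization_prod_mset_primes[of "mset (branch_sizes n ls)"]
      prime_branch_sizes[OF assms] by simp
  show "inner_prefix_products (branch_sizes n ls) = ls"
    using ne chain by (rule inner_prefix_products_branch_sizes)
qed

lemma permutation_of_prime_factorization:
  fixes n :: nat
  assumes "1 < n" and "\<not> prime n" and "ps \<in> permutations_of_multiset (prime_factorization n)"
  shows "\<forall>p\<in>set ps. prime p" and "prod_list ps = n" and "2 \<le> length ps"
proof -
  have ms: "mset ps = prime_factorization n"
    using assms(3) by (simp add: permutations_of_multiset_def)
  then show primes: "\<forall>p\<in>set ps. prime p"
    by (metis in_prime_factors_imp_prime set_mset_mset)
  have "prod_list ps = prod_mset (mset ps)"
    by (simp add: prod_mset_prod_list)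
  then show prod: "prod_list ps = n"
    using ms assms(1) by simp
  show "2 \<le> length ps"
  proof (rule ccontr)
    assume "\<not> 2 \<le> length ps"
    then consider "ps = []" | p where "ps = [p]"
      by (cases ps) (auto simp: Suc_le_eq)
    then show False
      using assms(1,2) primes prod by cases auto
  qed
qed

lemma bij_betw_branch_sizes:
  assumes "1 < n" and "\<not> prime n"
  shows "bij_betw (branch_sizes n) {ls. is_branch (nontrivial_divisors n) ls}
           (permutations_of_multiset (prime_factorization n))"
proof (rule bij_betw_byWitness[where f' = inner_prefix_products])
  note perm = permutation_of_prime_factorization[OF assms]
  show "\<forall>ls\<in>{ls. is_branch (nontrivial_divisors n) ls}.
          inner_prefix_products (branch_sizes n ls) = ls"
    using branch_sizes_of_branch(2) by blast
  show "\<forall>ps\<in>permutations_of_multiset (prime_factorization n).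
          branch_sizes n (inner_prefix_products ps) = ps"
  proof
    fix ps assume "ps \<in> permutations_of_multiset (prime_factorization n)"
    moreover from perm(1)[OF this] have "0 \<notin> set ps"
      using not_prime_0 by blast
    ultimately show "branch_sizes n (inner_prefix_products ps) = ps"
      using perm(2,3) branch_sizes_inner_prefix_products by metis
  qed
  show "branch_sizes n ` {ls. is_branch (nontrivial_divisors n) ls} \<subseteq>
          permutations_of_multiset (prime_factorization n)"
    using branch_sizes_of_branch(1) by (auto simp: permutations_of_multiset_def)
  show "inner_prefix_products ` permutations_of_multiset (prime_factorization n) \<subseteq>
          {ls. is_branch (nontrivial_divisors n) ls}"
    using perm is_branch_inner_prefix_products by (metis image_subsetI mem_Collect_eq)
qed

lemma size_prime_factorization:
  "size (prime_factorization n) = (\<Sum>p\<in>prime_factors n. multiplicity p n)"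
  by (simp add: size_multiset_overloaded_eq count_prime_factorization_prime in_prime_factors_imp_prime)

lemma card_permutations_of_prime_factorization:
  "card (permutations_of_multiset (prime_factorization n)) =
     fact (\<Sum>p\<in>prime_factors n. multiplicity p n) div (\<Prod>p\<in>prime_factors n. fact (multiplicity p n))"
proof -
  have "(\<Prod>p\<in>prime_factors n. fact (count (prime_factorization n) p)) =
          (\<Prod>p\<in>prime_factors n. fact (multiplicity p n) :: nat)"
    by (intro prod.cong) (simp_all add: count_prime_factorization_prime in_prime_factors_imp_prime)
  then show ?thesis
    by (simp add: card_permutations_of_multiset size_prime_factorization)
qed

lemma decomposable_composite:
  assumes "decomposable n A"
  shows "1 < n" and "\<not> prime n"
proof -
  obtain ns where ns: "1 < length ns" "\<forall>k\<in>set ns. 1 < k" "prod_list ns = n"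
    using assms by (auto simp: decomposable_def has_factorization_def)
  then obtain a rest where "ns = a # rest" "rest \<noteq> []"
    by (cases ns) auto
  with ns have "n = a * prod_list rest" "1 < a" "1 < prod_list rest"
    using prod_list_gt_1[of rest] by auto
  then show "1 < n" "\<not> prime n"
    using one_less_mult[of "prod_list rest" a] prime_product[of a "prod_list rest"] by auto
qed

lemma factor_set_maximal:
  assumes "maximal n A"
  shows "factor_set n A = nontrivial_divisors n"
proof (intro set_eqI iffI)
  fix d assume "d \<in> factor_set n A"
  then obtain e where "compatible_pair n d e"
    by (auto simp: factor_set_def)
  then have "d dvd n" "1 < d" "d \<noteq> n" "0 < n"
    by (auto simp: compatible_pair_def)
  then show "d \<in> nontrivial_divisors n"
    using dvd_imp_le[of d n] by (simp add: nontrivial_divisors_def)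
next
  fix d assume d: "d \<in> nontrivial_divisors n"
  then obtain e where n: "n = d * e"
    by (auto simp: nontrivial_divisors_def elim: dvdE)
  moreover from d n have "1 < e" "e < n"
    by (auto simp: nontrivial_divisors_def intro: ccontr)
  ultimately have "compatible_pair n d e"
    using d by (auto simp: compatible_pair_def nontrivial_divisors_def)
  with assms show "d \<in> factor_set n A"
    by (auto simp: maximal_def factor_set_def)
qed

theorem theorem1:
  fixes n :: nat and A :: bmat
  assumes "maximal n A"
  shows "(\<forall>ls. is_branch (factor_set n A) ls \<longrightarrow>
           (\<forall>x\<in>set (branch_sizes n ls). x \<in> prime_factors n) \<and>
           length (branch_sizes n ls) = (\<Sum>p\<in>prime_factors n. multiplicity p n)) \<and>
         card {ls. is_branch (factor_set n A) ls} =
           fact (\<Sum>p\<in>prime_factors n. multiplicity p n) div (\<Prod>p\<in>prime_factors n. fact (multiplicity p n))"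
proof -
  have L: "factor_set n A = nontrivial_divisors n"
    using assms by (rule factor_set_maximal)
  have "1 < n" "\<not> prime n"
    using assms decomposable_composite by (auto simp: maximal_def)
  note bij = bij_betw_branch_sizes[OF this]
  have "set (branch_sizes n ls) = prime_factors n"
    and "length (branch_sizes n ls) = (\<Sum>p\<in>prime_factors n. multiplicity p n)"
    if "is_branch (factor_set n A) ls" for ls
    using branch_sizes_of_branch(1)[of n ls] that L
    by (metis set_mset_mset, metis size_mset size_prime_factorization)
  moreover have "card {ls. is_branch (factor_set n A) ls} =
                   card (permutations_of_multiset (prime_factorization n))"
    using bij_betw_same_card[OF bij] L by simp
  ultimately show ?thesis
    by (simp add: card_permutations_of_prime_factorization)
qed

end
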